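(* Let $(X,E,\ell)$ be a uniformly connected edge-labelled directed graph with label alphabet $\Sigma$, equipped with transition probabilities $p(e)\ge\alpha>0$ for all $e\in E$ (for a constant $\alpha$) satisfying $\sum_{e:\,e^-=x}p(e)\le1$ for every $x$. Let $F\subset\Sigma^+$ be a finite, non-empty set which is relatively dense in $(X,E,\ell)$. Then $$\sup_{x,y\in X}\rho_{x,y}(P_F)<\rho(P)\quad\text{strictly.}$$
   Context: $\Sigma$ is a finite alphabet, $\Sigma^+$ the non-empty finite words. Edges $e=(x,a,y)$ have initial vertex $e^-=x$, terminal vertex $e^+=y$ and label $a\in\Sigma$ (two edges with the same endpoints have distinct labels); paths $\pi=e_1\cdots e_n$ (with $e_i^+=e_{i+1}^-$) have labels $\ell(e_1)\cdots\ell(e_n)$. Uniformly connected: for all $x,y$ there is a path from $x$ to $y$, and there is $K$ such that for each edge from $x$ to $y$ there is a path from $y$ to $x$ of length at most $K$. $d^+(x,y)$ is the minimal length of a path from $x$ to $y$; $F$ is relatively dense if there is $D$ such that for each $x$ there are $y$ and $w\in F$ with $d^+(x,y)\le D$ and a path starting at $y$ with label $w$. $P=(p(x,y))$ with $p(x,y)=\sum_{a:(x,a,y)\in E}p(x,a,y)$, $p^{(n)}(x,y)$ its $n$-th matrix power entries, and $\rho(P)=\limsup_n p^{(n)}(x,y)^{1/n}$ (independent of $x,y$). With $\mathbb P(\pi)=\prod_ip(e_i)$, $p_F^{(n)}(x,y)=\sum\mathbb P(\pi)$ over paths $\pi$ of length $n$ from $x$ to $y$ whose label contains no element of $F$ as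 a factor, and $\rho_{x,y}(P_F)=\limsup_n p_F^{(n)}(x,y)^{1/n}$. *)

theory Defs
  imports Complex_Main "HOL-Library.Extended_Real" "HOL-Library.Liminf_Limsup"
begin

type_synonym ('v,'a) edge = "'v \<times> 'a \<times> 'v"

definition e_init :: "('v,'a) edge \<Rightarrow> 'v" where "e_init e = fst e"
definition e_label :: "('v,'a) edge \<Rightarrow> 'a" where "e_label e = fst (snd e)"
definition e_term :: "('v,'a) edge \<Rightarrow> 'v" where "e_term e = snd (snd e)"

fun is_path :: "('v,'a) edge set \<Rightarrow> 'v \<Rightarrow> ('v,'a) edge list \<Rightarrow> 'v \<Rightarrow> bool" where
  "is_path E x [] y = (x = y)"
| "is_path E x (e # es) y = (e \<in> E \<and> e_init e = x \<and> is_path E (e_term e) es y)"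

definition path_label :: "('v,'a) edge list \<Rightarrow> 'a list" where
  "path_label ps = map e_label ps"

definition path_prob :: "(('v,'a) edge \<Rightarrow> real) \<Rightarrow> ('v,'a) edge list \<Rightarrow> real" where
  "path_prob p ps = prod_list (map p ps)"

definition is_factor :: "'a list \<Rightarrow> 'a list \<Rightarrow> bool" where
  "is_factor w u \<longleftrightarrow> (\<exists>s t. u = s @ w @ t)"

definition uniformly_connected :: "'v set \<Rightarrow> ('v,'a) edge set \<Rightarrow> bool" where
  "uniformly_connected X E \<longleftrightarrow>
     (\<forall>x\<in>X. \<forall>y\<in>X. \<exists>ps. is_path E x ps y) \<and>
     (\<exists>K::nat. \<forall>e\<in>E. \<exists>ps. is_path E (e_term e) ps (e_init e) \<and> length ps \<le> K)"

definition dplus :: "('v,'a) edge set \<Rightarrow> 'v \<Rightarrow> 'v \<Rightarrow> nat" where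
  "dplus E x y = (LEAST n. \<exists>ps. is_path E x ps y \<and> length ps = n)"

definition relatively_dense :: "'v set \<Rightarrow> ('v,'a) edge set \<Rightarrow> 'a list set \<Rightarrow> bool" where
  "relatively_dense X E F \<longleftrightarrow>
     (\<exists>D::nat. \<forall>x\<in>X. \<exists>y\<in>X. \<exists>w\<in>F. dplus E x y \<le> D \<and>
        (\<exists>ps z. is_path E y ps z \<and> path_label ps = w))"

definition pmat :: "('v,'a) edge set \<Rightarrow> (('v,'a) edge \<Rightarrow> real) \<Rightarrow> 'v \<Rightarrow> 'v \<Rightarrow> real" where
  "pmat E p x y = (\<Sum>a\<in>{a. (x,a,y) \<in> E}. p (x,a,y))"

fun pmat_pow :: "'v set \<Rightarrow> ('v,'a) edge set \<Rightarrow> (('v,'a) edge \<Rightarrow> real) \<Rightarrow> nat \<Rightarrow> 'v \<Rightarrow> 'v \<Rightarrow> real" where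
  "pmat_pow X E p 0 x y = (if x = y then 1 else 0)"
| "pmat_pow X E p (Suc n) x y = (\<Sum>z\<in>{z\<in>X. pmat E p x z \<noteq> 0}. pmat E p x z * pmat_pow X E p n z y)"

definition spec_rad :: "'v set \<Rightarrow> ('v,'a) edge set \<Rightarrow> (('v,'a) edge \<Rightarrow> real) \<Rightarrow> 'v \<Rightarrow> 'v \<Rightarrow> ereal" where
  "spec_rad X E p x y = limsup (\<lambda>n. ereal (root n (pmat_pow X E p n x y)))"

definition pF_pow :: "('v,'a) edge set \<Rightarrow> (('v,'a) edge \<Rightarrow> real) \<Rightarrow> 'a list set \<Rightarrow> nat \<Rightarrow> 'v \<Rightarrow> 'v \<Rightarrow> real" where
  "pF_pow E p F n x y = (\<Sum>ps\<in>{ps. length ps = n \<and> is_path E x ps y \<and>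
        \<not> (\<exists>w\<in>F. is_factor w (path_label ps))}. path_prob p ps)"

definition spec_rad_F :: "('v,'a) edge set \<Rightarrow> (('v,'a) edge \<Rightarrow> real) \<Rightarrow> 'a list set \<Rightarrow> 'v \<Rightarrow> 'v \<Rightarrow> ereal" where
  "spec_rad_F E p F x y = limsup (\<lambda>n. ereal (root n (pF_pow E p F n x y)))"

end

theory Submission
  imports Defs "HOL-Analysis.Summation_Tests"
begin

text \<open>Cut an F-free walk of length n into n div N blocks of length N. Before any subset of the
  blocks one may splice in a closed detour of bounded length whose first N edges read a word of F.
  The blocks themselves are F-free, so the spliced walk determines both the walk and the subset,
  and every detour costs at most a fixed factor gamma in probability. Weighting walks by
  z ^ length and attaching fixed walks x0 --> x and y --> y0 gives
  sum_n p_F^(n)(x,y) z^n (1 + gamma)^(n div N) <= C * sum_m p^(m)(x0,y0) z^m < infinity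
  whenever z < 1 / rho(P), hence rho_{x,y}(P_F) <= rho(P) / (1 + gamma)^(1/N).\<close>

lemma is_path_append:
  "is_path E x (ps @ qs) y \<longleftrightarrow> (\<exists>u. is_path E x ps u \<and> is_path E u qs y)"
  by (induction ps arbitrary: x) auto

lemma is_path_edges: "is_path E x ps y \<Longrightarrow> set ps \<subseteq> E"
  by (induction ps arbitrary: x) auto

lemma is_path_hd: "is_path E x ps y \<Longrightarrow> ps \<noteq> [] \<Longrightarrow> e_init (hd ps) = x"
  by (cases ps) auto

lemma is_path_concat_replicate:
  "is_path E v c v \<Longrightarrow> is_path E v (concat (replicate k c)) v"
  by (induction k) (auto simp: is_path_append)

lemma path_label_append: "path_label (ps @ qs) = path_label ps @ path_label qs"
  by (simp add: path_label_def)

lemma path_prob_append: "path_prob p (ps @ qs) = path_prob p ps * path_prob p qs"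
  by (simp add: path_prob_def)

lemma path_prob_nonneg: "\<forall>e\<in>set ps. 0 \<le> p e \<Longrightarrow> 0 \<le> path_prob p ps"
  unfolding path_prob_def by (rule prod_list_nonneg) auto

lemma path_prob_ge_power:
  assumes "\<forall>e\<in>set ps. a \<le> p e" and "0 \<le> a"
  shows "a ^ length ps \<le> path_prob p ps"
  using assms
proof (induction ps)
  case (Cons e ps)
  then have "a * a ^ length ps \<le> p e * path_prob p ps"
    by (intro mult_mono) auto
  then show ?case by (simp add: path_prob_def)
qed (simp add: path_prob_def)

lemma is_factor_refl: "is_factor w w"
  unfolding is_factor_def by (rule exI[of _ "[]"], rule exI[of _ "[]"]) simp

lemma is_factor_append: "is_factor w u \<Longrightarrow> is_factor w (s @ u @ t)"
  unfolding is_factor_def by (metis append.assoc)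

lemma dplus_path:
  assumes "is_path E x ps y"
  shows "\<exists>qs. is_path E x qs y \<and> length qs = dplus E x y"
  unfolding dplus_def by (rule LeastI_ex) (use assms in blast)

definition paths :: "('v,'a) edge set \<Rightarrow> nat \<Rightarrow> 'v \<Rightarrow> 'v \<Rightarrow> ('v,'a) edge list set" where
  "paths E n x y = {ps. length ps = n \<and> is_path E x ps y}"

lemma paths_0: "paths E 0 x y = (if x = y then {[]} else {})"
  by (auto simp: paths_def)

lemma paths_Suc:
  "paths E (Suc n) x y = (\<Union>e\<in>{e\<in>E. e_init e = x}. Cons e ` paths E n (e_term e) y)"
  by (auto simp: paths_def length_Suc_conv)

lemma sum_power_count_bool_lists:
  fixes g :: real
  shows "(\<Sum>bs\<in>{bs. length bs = k}. g ^ length (filter id bs)) = (1 + g) ^ k"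
proof (induction k)
  case (Suc k)
  let ?A = "{bs::bool list. length bs = k}" and ?f = "\<lambda>bs. g ^ length (filter id bs)"
  have split: "{bs. length bs = Suc k} = Cons True ` ?A \<union> Cons False ` ?A"
    by (auto simp: length_Suc_conv)
  have fin: "finite ?A"
    using finite_lists_length_eq[of "UNIV :: bool set" k] by simp
  have "(\<Sum>bs\<in>{bs. length bs = Suc k}. ?f bs) = sum ?f (Cons True ` ?A) + sum ?f (Cons False ` ?A)"
    unfolding split by (rule sum.union_disjoint) (use fin in auto)
  also have "\<dots> = g * sum ?f ?A + sum ?f ?A"
    by (simp add: sum.reindex sum_distrib_left)
  finally show ?case using Suc by (simp add: algebra_simps id_def)
qed simp

lemma real_root_power_le_power_div:
  fixes a :: real
  assumes "1 \<le> a" and "0 < N"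
  shows "root N a ^ n \<le> a ^ (n div N) * a"
proof -
  have "n \<le> N * (n div N) + N"
    using mod_less_divisor[OF assms(2), of n] mult_div_mod_eq[of N n] by linarith
  then have "n \<le> N * (n div N + 1)" by simp
  then have "root N a ^ n \<le> root N a ^ (N * (n div N + 1))"
    using assms by (intro power_increasing) auto
  also have "\<dots> = (root N a ^ N) ^ (n div N + 1)"
    by (simp only: power_mult)
  also have "\<dots> = a ^ (n div N + 1)"
    using assms by (simp add: real_root_pow_pos2)
  finally show ?thesis by (simp add: mult.commute)
qed

lemma limsup_root_le_of_geometric_bound:
  fixes a :: "nat \<Rightarrow> real"
  assumes bound: "\<And>n. a n \<le> C * s ^ n" and "0 < C" and "0 < s"
  shows "limsup (\<lambda>n. ereal (root n (a n))) \<le> ereal s"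
proof -
  have "\<forall>\<^sub>F n in sequentially. ereal (root n (a n)) \<le> ereal (root n C * s)"
    using eventually_gt_at_top[of "0::nat"]
  proof eventually_elim
    case (elim n)
    have "root n (a n) \<le> root n (C * s ^ n)" by (rule real_root_le_mono[OF elim bound])
    also have "\<dots> = root n C * s"
      using elim \<open>0 < s\<close> by (simp add: real_root_mult real_root_power_cancel)
    finally show ?case by simp
  qed
  then have "limsup (\<lambda>n. ereal (root n (a n))) \<le> limsup (\<lambda>n. ereal (root n C * s))"
    by (rule Limsup_mono)
  also have "(\<lambda>n. root n C * s) \<longlonglongrightarrow> 1 * s"
    by (intro tendsto_mult LIMSEQ_root_const \<open>0 < C\<close> tendsto_const)
  then have "limsup (\<lambda>n. ereal (root n C * s)) = ereal s"
    by (intro lim_imp_Limsup) auto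
  finally show ?thesis .
qed

lemma summable_of_limsup_root_less:
  fixes a :: "nat \<Rightarrow> real"
  assumes "\<And>n. 0 \<le> a n" and "0 < z" and "limsup (\<lambda>n. ereal (root n (a n))) < ereal (1 / z)"
  shows "summable (\<lambda>n. a n * z ^ n)"
proof (rule root_test_convergence')
  have "root n (norm (a n * z ^ n)) = root n (a n) * z" for n
    using assms(1,2) by (cases "n = 0") (simp_all add: abs_mult real_root_mult real_root_power_cancel)
  then have "limsup (\<lambda>n. ereal (root n (norm (a n * z ^ n))))
      = limsup (\<lambda>n. ereal (root n (a n))) * ereal z"
    using assms(2) by (simp add: limsup_ereal_mult_right[symmetric])
  also have "\<dots> < ereal (1 / z) * ereal z"
    using assms(2,3) by (intro ereal_mult_strict_right_mono) auto
  finally show "limsup (\<lambda>n. ereal (root n (norm (a n * z ^ n)))) < 1"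
    using assms(2) by (simp add: one_ereal_def)
qed

locale substochastic_graph =
  fixes X :: "'v set" and \<Sigma> :: "'a set" and E :: "('v,'a) edge set"
    and p :: "('v,'a) edge \<Rightarrow> real" and \<alpha> :: real
  assumes finite_alphabet: "finite \<Sigma>"
    and edges_subset: "E \<subseteq> X \<times> \<Sigma> \<times> X"
    and alpha_pos: "0 < \<alpha>"
    and prob_ge_alpha: "\<forall>e\<in>E. \<alpha> \<le> p e"
    and out_sum_le_1: "\<forall>x\<in>X. \<forall>A. A \<subseteq> {e\<in>E. e_init e = x} \<and> finite A \<longrightarrow> (\<Sum>e\<in>A. p e) \<le> 1"
begin

lemma edge_init_in: "e \<in> E \<Longrightarrow> e_init e \<in> X"
  using edges_subset by (auto simp: e_init_def)

lemma edge_term_in: "e \<in> E \<Longrightarrow> e_term e \<in> X"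
  using edges_subset by (auto simp: e_term_def)

lemma is_path_end_in: "is_path E x ps y \<Longrightarrow> x \<in> X \<Longrightarrow> y \<in> X"
  by (induction ps arbitrary: x) (auto simp: edge_term_in)

lemma prob_nonneg: "e \<in> E \<Longrightarrow> 0 \<le> p e"
  using prob_ge_alpha alpha_pos by force

lemma path_prob_nonneg_path: "is_path E x ps y \<Longrightarrow> 0 \<le> path_prob p ps"
  by (metis is_path_edges path_prob_nonneg prob_nonneg subsetD)

lemma path_prob_ge_alpha_power: "is_path E x ps y \<Longrightarrow> \<alpha> ^ length ps \<le> path_prob p ps"
  using alpha_pos prob_ge_alpha is_path_edges[of E x ps y] by (intro path_prob_ge_power) auto

lemma alpha_le_1:
  assumes "e \<in> E"
  shows "\<alpha> \<le> 1"
proof -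
  have "(\<Sum>e'\<in>{e}. p e') \<le> 1"
    using out_sum_le_1 edge_init_in[OF assms] assms by blast
  then show ?thesis using prob_ge_alpha assms by auto
qed

lemma finite_out_edges: "finite {e\<in>E. e_init e = x}"
proof (rule ccontr)
  assume infinite: "infinite {e\<in>E. e_init e = x}"
  then have "x \<in> X" using edge_init_in by (metis (mono_tags, lifting) empty_Collect_eq finite.emptyI)
  obtain B where B: "B \<subseteq> {e\<in>E. e_init e = x}" "finite B" "card B = nat \<lceil>1 / \<alpha>\<rceil> + 1"
    using infinite_arbitrarily_large[OF infinite] by blast
  have "1 / \<alpha> < real (card B)"
    using B(3) by linarith
  then have "1 < real (card B) * \<alpha>"
    using alpha_pos by (simp add: field_simps)
  also have "\<dots> \<le> (\<Sum>e\<in>B. p e)"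
    using B(1) prob_ge_alpha sum_mono[of B "\<lambda>_. \<alpha>" p] by auto
  also have "\<dots> \<le> 1"
    using out_sum_le_1 \<open>x \<in> X\<close> B by blast
  finally show False by simp
qed

lemma sum_out_edges_le_1: "(\<Sum>e\<in>{e\<in>E. e_init e = x}. p e) \<le> 1"
proof (cases "x \<in> X")
  case False
  then have "{e\<in>E. e_init e = x} = {}" using edge_init_in by blast
  then show ?thesis by (simp only: sum.empty)
qed (use out_sum_le_1 finite_out_edges in blast)

lemma finite_paths: "finite (paths E n x y)"
  by (induction n arbitrary: x) (auto simp: paths_0 paths_Suc finite_out_edges)

lemma sum_paths_Suc:
  "(\<Sum>ps\<in>paths E (Suc n) x y. f ps) = (\<Sum>e\<in>{e\<in>E. e_init e = x}. \<Sum>ps\<in>paths E n (e_term e) y. f (e # ps))"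
  unfolding paths_Suc
  by (subst sum.UNION_disjoint) (auto simp: finite_out_edges finite_paths sum.reindex)

lemma sum_paths_prob_le_1: "(\<Sum>ps\<in>paths E n x y. path_prob p ps) \<le> 1"
proof (induction n arbitrary: x)
  case (Suc n)
  have "(\<Sum>ps\<in>paths E (Suc n) x y. path_prob p ps)
      = (\<Sum>e\<in>{e\<in>E. e_init e = x}. p e * (\<Sum>ps\<in>paths E n (e_term e) y. path_prob p ps))"
    by (simp add: sum_paths_Suc sum_distrib_left path_prob_def)
  also have "\<dots> \<le> (\<Sum>e\<in>{e\<in>E. e_init e = x}. p e)"
    using Suc prob_nonneg by (intro sum_mono) (simp add: mult_left_le)
  finally show ?case using sum_out_edges_le_1[of x] by linarith
qed (simp add: paths_0 path_prob_def)

lemma pmat_eq_sum_edges: "pmat E p x z = (\<Sum>e\<in>{e\<in>E. e_init e = x \<and> e_term e = z}. p e)"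
proof -
  have "{e\<in>E. e_init e = x \<and> e_term e = z} = (\<lambda>a. (x, a, z)) ` {a. (x, a, z) \<in> E}"
    by (auto simp: e_init_def e_term_def)
  then show ?thesis unfolding pmat_def by (simp add: sum.reindex inj_on_def)
qed

lemma pmat_pos_iff: "0 < pmat E p x z \<longleftrightarrow> (\<exists>e\<in>E. e_init e = x \<and> e_term e = z)"
proof
  assume "\<exists>e\<in>E. e_init e = x \<and> e_term e = z"
  then obtain e where e: "e \<in> E" "e_init e = x" "e_term e = z" by blast
  have "p e \<le> pmat E p x z"
    unfolding pmat_eq_sum_edges
    by (rule member_le_sum) (use e prob_nonneg finite_out_edges[of x] in \<open>auto elim: finite_subset[rotated]\<close>)
  then show "0 < pmat E p x z" using e prob_ge_alpha alpha_pos by force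
next
  assume pos: "0 < pmat E p x z"
  show "\<exists>e\<in>E. e_init e = x \<and> e_term e = z"
  proof (rule ccontr)
    assume "\<not> ?thesis"
    then have "{e\<in>E. e_init e = x \<and> e_term e = z} = {}" by blast
    then show False using pos by (simp only: pmat_eq_sum_edges sum.empty)
  qed
qed

lemma pmat_nonneg: "0 \<le> pmat E p x z"
  unfolding pmat_eq_sum_edges by (auto intro: sum_nonneg prob_nonneg)

lemma pmat_pow_eq_sum_paths: "pmat_pow X E p n x y = (\<Sum>ps\<in>paths E n x y. path_prob p ps)"
proof (induction n arbitrary: x)
  case (Suc n)
  define Out where "Out = {e\<in>E. e_init e = x}"
  have succ: "{z\<in>X. pmat E p x z \<noteq> 0} = e_term ` Out"
    using pmat_pos_iff[of x] pmat_nonneg[of x] edge_term_in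
    unfolding Out_def by (auto simp: order_less_le)
  have "(\<Sum>ps\<in>paths E (Suc n) x y. path_prob p ps) = (\<Sum>e\<in>Out. p e * pmat_pow X E p n (e_term e) y)"
    by (simp add: Out_def Suc sum_paths_Suc sum_distrib_left path_prob_def)
  also have "\<dots> = (\<Sum>z\<in>e_term ` Out. \<Sum>e\<in>{e\<in>Out. e_term e = z}. p e * pmat_pow X E p n z y)"
    by (subst sum.image_gen[OF finite_out_edges[of x, folded Out_def]]) (auto intro!: sum.cong)
  also have "\<dots> = (\<Sum>z\<in>e_term ` Out. pmat E p x z * pmat_pow X E p n z y)"
    by (intro sum.cong refl) (simp add: pmat_eq_sum_edges Out_def sum_distrib_right conj_assoc)
  finally show ?case by (simp add: succ)
qed (simp add: paths_0 path_prob_def)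

lemma pmat_pow_nonneg: "0 \<le> pmat_pow X E p n x y"
  unfolding pmat_pow_eq_sum_paths by (auto intro!: sum_nonneg path_prob_nonneg_path simp: paths_def)

lemma pmat_pow_le_1: "pmat_pow X E p n x y \<le> 1"
  unfolding pmat_pow_eq_sum_paths by (rule sum_paths_prob_le_1)

lemma path_prob_le_pmat_pow: "is_path E x ps y \<Longrightarrow> path_prob p ps \<le> pmat_pow X E p (length ps) x y"
  unfolding pmat_pow_eq_sum_paths
  by (rule member_le_sum) (auto simp: paths_def finite_paths[unfolded paths_def] path_prob_nonneg_path)

lemma spec_rad_le_1: "spec_rad X E p x y \<le> 1"
  unfolding spec_rad_def
proof (rule Limsup_bounded)
  show "\<forall>\<^sub>F n in sequentially. ereal (root n (pmat_pow X E p n x y)) \<le> 1"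
    using eventually_gt_at_top[of "0::nat"]
  proof eventually_elim
    case (elim n)
    then have "root n (pmat_pow X E p n x y) \<le> root n 1"
      by (rule real_root_le_mono[OF _ pmat_pow_le_1])
    then show ?case using elim by simp
  qed
qed

lemma spec_rad_ge_alpha:
  assumes "is_path E x q y" and "is_path E y c y" and "c \<noteq> []"
  shows "ereal \<alpha> \<le> spec_rad X E p x y"
proof -
  define f where "f n = ereal (root n (pmat_pow X E p n x y))" for n
  have f_ge: "ereal \<alpha> \<le> f (length q + k * length c)" if "0 < k" for k
  proof -
    define m where "m = length q + k * length c"
    have path: "is_path E x (q @ concat (replicate k c)) y"
      using assms(1) is_path_concat_replicate[OF assms(2)] by (auto simp: is_path_append)
    have len: "length (q @ concat (replicate k c)) = m"
      by (simp add: m_def length_concat sum_list_replicate)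
    have "0 < m" using that assms(3) by (simp add: m_def)
    have "\<alpha> ^ m \<le> pmat_pow X E p m x y"
      using path_prob_ge_alpha_power[OF path] path_prob_le_pmat_pow[OF path] len by simp
    then have "root m (\<alpha> ^ m) \<le> root m (pmat_pow X E p m x y)"
      using \<open>0 < m\<close> by (rule real_root_le_mono[rotated])
    then show ?thesis
      using \<open>0 < m\<close> alpha_pos by (simp add: f_def m_def real_root_power_cancel)
  qed
  have "ereal \<alpha> \<le> (INF n. SUP m\<in>{n..}. f m)"
  proof (rule INF_greatest)
    fix n
    have "n \<le> length q + Suc n * length c"
      using assms(3) by (cases c) auto
    then show "ereal \<alpha> \<le> (SUP m\<in>{n..}. f m)"
      using f_ge[of "Suc n"] by (meson SUP_upper atLeast_iff order_trans zero_less_Suc)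
  qed
  then show ?thesis unfolding spec_rad_def limsup_INF_SUP f_def .
qed

definition weight :: "real \<Rightarrow> ('v,'a) edge list \<Rightarrow> real" where
  "weight z ps = path_prob p ps * z ^ length ps"

lemma weight_Nil: "weight z [] = 1"
  by (simp add: weight_def path_prob_def)

lemma weight_append: "weight z (ps @ qs) = weight z ps * weight z qs"
  by (simp add: weight_def path_prob_append power_add)

lemma weight_pos: "is_path E x ps y \<Longrightarrow> 0 < z \<Longrightarrow> 0 < weight z ps"
  unfolding weight_def using path_prob_ge_alpha_power[of x ps y] alpha_pos
  by (metis mult_pos_pos order_less_le_trans zero_less_power)

lemma sum_weight_paths: "(\<Sum>r\<in>paths E m x y. weight z r) = pmat_pow X E p m x y * z ^ m"
  by (simp add: pmat_pow_eq_sum_paths weight_def paths_def sum_distrib_right)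

lemma sum_weight_le_suminf:
  assumes "0 < z" and "summable (\<lambda>m. pmat_pow X E p m x y * z ^ m)"
    and "finite R" and "\<forall>r\<in>R. is_path E x r y"
  shows "(\<Sum>r\<in>R. weight z r) \<le> (\<Sum>m. pmat_pow X E p m x y * z ^ m)"
proof -
  define B where "B = Suc (Max (length ` R))"
  have "R \<subseteq> (\<Union>m<B. paths E m x y)"
  proof
    fix r assume "r \<in> R"
    then have "length r < B" using assms(3) by (simp add: B_def less_Suc_eq_le)
    then show "r \<in> (\<Union>m<B. paths E m x y)" using assms(4) \<open>r \<in> R\<close> by (auto simp: paths_def)
  qed
  then have "(\<Sum>r\<in>R. weight z r) \<le> (\<Sum>r\<in>(\<Union>m<B. paths E m x y). weight z r)"
    using assms(1) by (intro sum_mono2) (auto simp: finite_paths[unfolded paths_def] paths_def intro: less_imp_le weight_pos)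
  also have "\<dots> = (\<Sum>m<B. pmat_pow X E p m x y * z ^ m)"
    by (subst sum.UNION_disjoint) (auto simp: finite_paths[unfolded paths_def] paths_def sum_weight_paths[unfolded paths_def])
  also have "\<dots> \<le> (\<Sum>m. pmat_pow X E p m x y * z ^ m)"
    using assms(1,2) pmat_pow_nonneg by (intro sum_le_suminf) auto
  finally show ?thesis .
qed

lemma weight_nonneg:
  assumes "set ps \<subseteq> E" and "0 \<le> z"
  shows "0 \<le> weight z ps"
proof -
  have "0 \<le> path_prob p ps" using assms(1) prob_nonneg by (intro path_prob_nonneg) auto
  then show ?thesis using assms(2) by (simp add: weight_def)
qed

lemma pF_pow_nonneg: "0 \<le> pF_pow E p F n x y"
  unfolding pF_pow_def by (auto intro!: sum_nonneg path_prob_nonneg_path)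

end

locale dense_forbidden_factors = substochastic_graph X \<Sigma> E p \<alpha>
  for X :: "'v set" and \<Sigma> :: "'a set" and E :: "('v,'a) edge set"
    and p :: "('v,'a) edge \<Rightarrow> real" and \<alpha> :: real +
  fixes F :: "'a list set" and K D :: nat
  assumes finite_F: "finite F"
    and Nil_notin_F: "[] \<notin> F"
    and connected: "\<forall>x\<in>X. \<forall>y\<in>X. \<exists>ps. is_path E x ps y"
    and return_bound: "\<forall>e\<in>E. \<exists>ps. is_path E (e_term e) ps (e_init e) \<and> length ps \<le> K"
    and dense: "\<forall>x\<in>X. \<exists>y\<in>X. \<exists>w\<in>F. dplus E x y \<le> D \<and> (\<exists>ps z. is_path E y ps z \<and> path_label ps = w)"
begin

lemma return_path: "is_path E x ps y \<Longrightarrow> \<exists>qs. is_path E y qs x \<and> length qs \<le> K * length ps"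
proof (induction ps arbitrary: x)
  case Nil
  then show ?case by (intro exI[of _ "[]"]) simp
next
  case (Cons e ps)
  then have e: "e \<in> E" "e_init e = x" and rest: "is_path E (e_term e) ps y" by auto
  obtain qs where qs: "is_path E y qs (e_term e)" "length qs \<le> K * length ps"
    using Cons.IH[OF rest] by blast
  obtain rs where rs: "is_path E (e_term e) rs x" "length rs \<le> K"
    using return_bound e by blast
  have "is_path E y (qs @ rs) x" unfolding is_path_append using qs(1) rs(1) by blast
  moreover have "length (qs @ rs) \<le> K * length (e # ps)" using qs rs by simp
  ultimately show ?case by blast
qed

definition F_free :: "('v,'a) edge list \<Rightarrow> bool" where
  "F_free ps \<longleftrightarrow> \<not> (\<exists>w\<in>F. is_factor w (path_label ps))"

lemma F_free_Nil: "F_free []"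
  using Nil_notin_F by (auto simp: F_free_def is_factor_def path_label_def)

lemma F_free_appendD: "F_free (ps @ qs) \<Longrightarrow> F_free ps \<and> F_free qs"
  using is_factor_append[of _ "path_label ps" "[]" "path_label qs"]
    is_factor_append[of _ "path_label qs" "path_label ps" "[]"]
  by (auto simp: F_free_def path_label_append)

lemma F_free_take: "F_free ps \<Longrightarrow> F_free (take n ps)"
  by (metis F_free_appendD append_take_drop_id)

lemma F_free_drop: "F_free ps \<Longrightarrow> F_free (drop n ps)"
  by (metis F_free_appendD append_take_drop_id)

text \<open>Every vertex is within distance D of the start of a path reading a word of F, which has
  length at most Max (length ` F); returning to the vertex costs at most K steps per edge.\<close>

definition block_len :: nat where
  "block_len = D + Max (length ` F) + 1"

definition detour_len :: nat where
  "detour_len = (K + 1) * (D + Max (length ` F))"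

definition is_detour :: "'v \<Rightarrow> ('v,'a) edge list \<Rightarrow> bool" where
  "is_detour v d \<longleftrightarrow> is_path E v d v \<and> length d \<le> detour_len \<and> \<not> F_free (take block_len d)"

lemma detour_exists:
  assumes "v \<in> X"
  shows "\<exists>d. is_detour v d"
proof -
  obtain y w ps z where y: "y \<in> X" "dplus E v y \<le> D" and w: "w \<in> F"
    and ps: "is_path E y ps z" "path_label ps = w"
    using dense assms by blast
  obtain q where "is_path E v q y" using connected assms y(1) by blast
  then obtain q1 where q1: "is_path E v q1 y" "length q1 \<le> D"
    using dplus_path y(2) by metis
  have "length w \<le> Max (length ` F)"
    using w finite_F by simp
  then have "length ps \<le> Max (length ` F)"
    using ps(2) unfolding path_label_def by auto
  then have short: "length q1 + length ps \<le> D + Max (length ` F)"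
    using q1(2) by linarith
  have out: "is_path E v (q1 @ ps) z" using q1 ps by (auto simp: is_path_append)
  obtain q3 where q3: "is_path E z q3 v" "length q3 \<le> K * length (q1 @ ps)"
    using return_path[OF out] by blast
  define d where "d = q1 @ ps @ q3"
  have "is_path E v d v"
    unfolding d_def is_path_append using q1(1) ps(1) q3(1) by blast
  moreover have "length d \<le> detour_len"
  proof -
    have "length q3 \<le> K * (D + Max (length ` F))"
      using mult_le_mono2[OF short, of K] q3(2) by (simp only: length_append)
    then show ?thesis using short by (simp add: d_def detour_len_def)
  qed
  moreover have "\<not> F_free (take block_len d)"
  proof -
    have prefix: "take block_len d = q1 @ ps @ take (block_len - length q1 - length ps) q3"
      using short by (simp add: d_def block_len_def)
    have "is_factor w (path_label (take block_len d))"
      unfolding prefix path_label_append ps(2) by (intro is_factor_append is_factor_refl)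
    then show ?thesis
      using w by (auto simp: F_free_def)
  qed
  ultimately show ?thesis unfolding is_detour_def by blast
qed

definition detour :: "'v \<Rightarrow> ('v,'a) edge list" where
  "detour v = (SOME d. is_detour v d)"

lemma is_detour_detour: "v \<in> X \<Longrightarrow> is_detour v (detour v)"
  unfolding detour_def using detour_exists by (rule someI_ex)

lemma detour_path: "v \<in> X \<Longrightarrow> is_path E v (detour v) v"
  using is_detour_detour is_detour_def by blast

lemma detour_not_Nil: "v \<in> X \<Longrightarrow> detour v \<noteq> []"
  using is_detour_detour[of v] F_free_Nil by (auto simp: is_detour_def)

lemma closed_walk_exists: "v \<in> X \<Longrightarrow> \<exists>c. c \<noteq> [] \<and> is_path E v c v"
  using detour_path detour_not_Nil by blast

lemma block_len_pos: "0 < block_len"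
  by (simp add: block_len_def)

lemma block_start_in:
  assumes "set ps \<subseteq> E" and "block_len \<le> length ps"
  shows "e_init (hd ps) \<in> X"
proof -
  have "ps \<noteq> []" using assms(2) block_len_pos by auto
  then show ?thesis using assms(1) edge_init_in hd_in_set by blast
qed

fun insert_detours :: "bool list \<Rightarrow> ('v,'a) edge list \<Rightarrow> ('v,'a) edge list" where
  "insert_detours [] ps = ps"
| "insert_detours (b # bs) ps =
     (if b then detour (e_init (hd ps)) else []) @ take block_len ps @ insert_detours bs (drop block_len ps)"

lemma insert_detours_path:
  "is_path E x ps y \<Longrightarrow> x \<in> X \<Longrightarrow> block_len * length bs \<le> length ps \<Longrightarrow>
    is_path E x (insert_detours bs ps) y"
proof (induction bs arbitrary: x ps)
  case (Cons b bs)
  have "ps \<noteq> []" using Cons.prems(3) block_len_pos by auto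
  then have start: "e_init (hd ps) = x" using is_path_hd[OF Cons.prems(1)] by blast
  obtain u where u: "is_path E x (take block_len ps) u" "is_path E u (drop block_len ps) y"
    using Cons.prems(1) is_path_append[of E x "take block_len ps" "drop block_len ps" y] by auto
  have "u \<in> X" using is_path_end_in[OF u(1) Cons.prems(2)] .
  then have rest: "is_path E u (insert_detours bs (drop block_len ps)) y"
    using Cons.prems(3) u(2) by (intro Cons.IH) auto
  have d: "is_path E x (if b then detour (e_init (hd ps)) else []) x"
    using detour_path[OF Cons.prems(2)] start by simp
  show ?case
    unfolding insert_detours.simps is_path_append using d u(1) rest by blast
qed simp

text \<open>A gain uniform in z \<ge> 1/2 suffices, since rho(P) \<le> 1 lets us work with z close to
  1 / rho(P) \<ge> 1.\<close>

definition detour_gain :: real where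
  "detour_gain = (\<alpha> / 2) ^ detour_len"

lemma detour_gain_pos: "0 < detour_gain"
  using alpha_pos by (simp add: detour_gain_def)

lemma weight_detour_ge:
  assumes "1 / 2 \<le> z" and "v \<in> X"
  shows "detour_gain \<le> weight z (detour v)"
proof -
  let ?d = "detour v"
  have path: "is_path E v ?d v" and len: "length ?d \<le> detour_len"
    using is_detour_detour[OF assms(2)] by (auto simp: is_detour_def)
  have "hd ?d \<in> E"
    using is_path_edges[OF path] detour_not_Nil[OF assms(2)] by auto
  then have "\<alpha> / 2 \<le> 1" using alpha_le_1[OF \<open>hd ?d \<in> E\<close>] by simp
  then have "(\<alpha> / 2) ^ detour_len \<le> (\<alpha> / 2) ^ length ?d"
    using alpha_pos len by (intro power_decreasing) auto
  also have "\<dots> = \<alpha> ^ length ?d * (1 / 2) ^ length ?d"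
    by (simp add: power_divide)
  also have "\<dots> \<le> path_prob p ?d * z ^ length ?d"
    using path_prob_ge_alpha_power[OF path] assms(1) alpha_pos
    by (intro mult_mono power_mono) (auto intro: path_prob_nonneg_path[OF path])
  finally show ?thesis by (simp add: detour_gain_def weight_def)
qed

lemma weight_insert_detours_ge:
  assumes "1 / 2 \<le> z"
  shows "set ps \<subseteq> E \<Longrightarrow> block_len * length bs \<le> length ps \<Longrightarrow>
    weight z ps * detour_gain ^ length (filter id bs) \<le> weight z (insert_detours bs ps)"
proof (induction bs arbitrary: ps)
  case (Cons b bs)
  let ?dd = "if b then detour (e_init (hd ps)) else []"
    and ?c = "if b then detour_gain else 1"
    and ?t = "take block_len ps" and ?r = "drop block_len ps"
    and ?g = "detour_gain ^ length (filter id bs)"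
  have start: "e_init (hd ps) \<in> X"
    using Cons.prems by (intro block_start_in) auto
  have z: "0 \<le> z" using assms by simp
  have sets: "set ?t \<subseteq> E" "set ?r \<subseteq> E"
    using Cons.prems(1) by (auto dest: in_set_takeD in_set_dropD)
  have "?c \<le> weight z ?dd"
    using weight_detour_ge[OF assms start] by (simp add: weight_def path_prob_def)
  moreover have "weight z ?r * ?g \<le> weight z (insert_detours bs ?r)"
    using Cons.prems by (intro Cons.IH sets(2)) auto
  moreover have "0 \<le> weight z ?t" "0 \<le> weight z ?r" "0 \<le> ?c" "0 \<le> ?g"
    using sets z detour_gain_pos by (auto intro: weight_nonneg less_imp_le)
  ultimately have "?c * weight z ?t * (weight z ?r * ?g) \<le> weight z ?dd * weight z ?t * weight z (insert_detours bs ?r)"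
    by (intro mult_mono) auto
  moreover have "weight z ps = weight z ?t * weight z ?r"
    by (metis append_take_drop_id weight_append)
  ultimately show ?case
    by (cases b) (simp_all add: weight_append weight_Nil mult_ac id_def)
qed simp

lemma F_free_take_insert_detours_iff:
  assumes "F_free ps" and "set ps \<subseteq> E" and "block_len \<le> length ps"
  shows "F_free (take block_len (insert_detours (b # bs) ps)) \<longleftrightarrow> \<not> b"
proof (cases b)
  case True
  let ?d = "detour (e_init (hd ps))"
  let ?r = "take block_len ps @ insert_detours bs (drop block_len ps)"
  have "\<not> F_free (take block_len ?d)"
    using is_detour_detour[OF block_start_in[OF assms(2,3)]] by (simp add: is_detour_def)
  moreover have "take block_len (?d @ ?r) = take block_len ?d @ take (block_len - length ?d) ?r"
    by (rule take_append)
  ultimately have "\<not> F_free (take block_len (?d @ ?r))"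
    using F_free_appendD by metis
  then show ?thesis using True by simp
next
  case False
  then show ?thesis
    using assms by (simp add: F_free_take)
qed

lemma hd_insert_detours:
  assumes "set ps \<subseteq> E" and "block_len \<le> length ps"
  shows "e_init (hd (insert_detours (b # bs) ps)) = e_init (hd ps)"
proof (cases b)
  case True
  let ?v = "e_init (hd ps)"
  have "?v \<in> X" using block_start_in[OF assms] .
  then have "e_init (hd (detour ?v)) = ?v"
    using is_path_hd[OF detour_path] detour_not_Nil by blast
  then show ?thesis
    using True detour_not_Nil[OF \<open>?v \<in> X\<close>] by simp
next
  case False
  have "take block_len ps \<noteq> []" using assms(2) block_len_pos by auto
  then show ?thesis using False block_len_pos by simp
qed

lemma insert_detours_inj:
  "insert_detours bs ps = insert_detours bs' ps' \<Longrightarrow> F_free ps \<Longrightarrow> F_free ps' \<Longrightarrow>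
    set ps \<subseteq> E \<Longrightarrow> set ps' \<subseteq> E \<Longrightarrow> length ps = length ps' \<Longrightarrow> length bs = length bs' \<Longrightarrow>
    block_len * length bs \<le> length ps \<Longrightarrow> bs = bs' \<and> ps = ps'"
proof (induction bs arbitrary: bs' ps ps')
  case (Cons b bs)
  obtain b' bs'' where bs': "bs' = b' # bs''"
    using Cons.prems(7) by (cases bs') auto
  have long: "block_len \<le> length ps" "block_len \<le> length ps'"
    using Cons.prems(6,8) by auto
  have "b = b'"
    using F_free_take_insert_detours_iff[OF Cons.prems(2,4) long(1), of b bs]
      F_free_take_insert_detours_iff[OF Cons.prems(3,5) long(2), of b' bs''] Cons.prems(1) bs'
    by (simp del: insert_detours.simps)
  moreover have "e_init (hd ps) = e_init (hd ps')"
    using hd_insert_detours[OF Cons.prems(4) long(1), of b bs]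
      hd_insert_detours[OF Cons.prems(5) long(2), of b' bs''] Cons.prems(1) bs'
    by simp
  ultimately have "take block_len ps @ insert_detours bs (drop block_len ps)
      = take block_len ps' @ insert_detours bs'' (drop block_len ps')"
    using Cons.prems(1) bs' by simp
  then have take: "take block_len ps = take block_len ps'"
    and rest: "insert_detours bs (drop block_len ps) = insert_detours bs'' (drop block_len ps')"
    using long by (auto simp: append_eq_append_conv)
  have "bs = bs'' \<and> drop block_len ps = drop block_len ps'"
    using Cons.prems(6-8) bs'
    by (intro Cons.IH[OF rest] F_free_drop Cons.prems(2,3))
      (auto dest: in_set_dropD[where n = block_len] intro: subsetD[OF Cons.prems(4)] subsetD[OF Cons.prems(5)])
  moreover have "ps = take block_len ps @ drop block_len ps"
    "ps' = take block_len ps' @ drop block_len ps'" by simp_all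
  ultimately show ?case
    using take \<open>b = b'\<close> bs' by simp
qed simp

lemma pF_pow_eq_sum_F_free: "pF_pow E p F n x y = (\<Sum>ps\<in>{ps\<in>paths E n x y. F_free ps}. path_prob p ps)"
  unfolding pF_pow_def paths_def F_free_def by (simp add: conj_assoc)

lemma F_free_weighted_le_sum_weight:
  assumes "x \<in> X" and "1 / 2 \<le> z"
  shows "\<exists>R. finite R \<and> (\<forall>r\<in>R. is_path E x r y) \<and>
    pF_pow E p F n x y * z ^ n * (1 + detour_gain) ^ (n div block_len) \<le> (\<Sum>r\<in>R. weight z r)"
proof -
  define P where "P = {ps\<in>paths E n x y. F_free ps}"
  define B where "B = {bs :: bool list. length bs = n div block_len}"
  define g where "g = (\<lambda>(ps, bs). insert_detours bs ps)"
  have finite: "finite P" "finite B"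
    using finite_paths finite_lists_length_eq[of "UNIV :: bool set"] by (simp_all add: P_def B_def)
  have P: "is_path E x ps y" "length ps = n" "F_free ps" "set ps \<subseteq> E" if "ps \<in> P" for ps
    using that is_path_edges[of E x ps y] by (auto simp: P_def paths_def)
  have fits: "block_len * (n div block_len) \<le> n"
    by (simp add: mult.commute)
  have "(\<Sum>ps\<in>P. weight z ps) = pF_pow E p F n x y * z ^ n"
    unfolding pF_pow_eq_sum_F_free P_def[symmetric] sum_distrib_right
    by (intro sum.cong refl) (simp add: weight_def P(2))
  then have "pF_pow E p F n x y * z ^ n * (1 + detour_gain) ^ (n div block_len)
      = (\<Sum>ps\<in>P. weight z ps) * (\<Sum>bs\<in>B. detour_gain ^ length (filter id bs))"
    by (simp add: B_def sum_power_count_bool_lists)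
  also have "\<dots> = (\<Sum>(ps, bs)\<in>P \<times> B. weight z ps * detour_gain ^ length (filter id bs))"
    by (simp add: sum_product sum.cartesian_product)
  also have "\<dots> \<le> (\<Sum>(ps, bs)\<in>P \<times> B. weight z (insert_detours bs ps))"
    using assms(2) P(2,4) fits by (intro sum_mono) (auto simp: B_def intro!: weight_insert_detours_ge)
  also have "\<dots> = (\<Sum>r\<in>g ` (P \<times> B). weight z r)"
  proof -
    have "inj_on g (P \<times> B)"
    proof (rule inj_onI)
      fix u u' assume u: "u \<in> P \<times> B" "u' \<in> P \<times> B" "g u = g u'"
      obtain ps bs ps' bs' where uu: "u = (ps, bs)" "u' = (ps', bs')" by fastforce
      show "u = u'"
        using u insert_detours_inj[of bs ps bs' ps'] P(2-4) fits by (auto simp: uu g_def B_def)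
    qed
    then show ?thesis by (simp add: sum.reindex g_def case_prod_unfold)
  qed
  finally show ?thesis
    using finite assms(1) P(1,2) fits
    by (intro exI[of _ "g ` (P \<times> B)"]) (auto simp: g_def B_def intro!: insert_detours_path)
qed

lemma F_free_generating_bound:
  assumes "x \<in> X" "y \<in> X" "x0 \<in> X" "y0 \<in> X" and "1 / 2 \<le> z"
    and "summable (\<lambda>m. pmat_pow X E p m x0 y0 * z ^ m)"
  shows "\<exists>C. \<forall>n. pF_pow E p F n x y * z ^ n * (1 + detour_gain) ^ (n div block_len) \<le> C"
proof -
  obtain q0 q1 where q0: "is_path E x0 q0 x" and q1: "is_path E y q1 y0"
    using connected assms(1-4) by blast
  define c where "c = weight z q0 * weight z q1"
  have "0 < c" unfolding c_def using assms(5) weight_pos[OF q0] weight_pos[OF q1] by simp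
  define G where "G = (\<Sum>m. pmat_pow X E p m x0 y0 * z ^ m)"
  have "pF_pow E p F n x y * z ^ n * (1 + detour_gain) ^ (n div block_len) \<le> G / c" for n
  proof -
    obtain R where R: "finite R" "\<forall>r\<in>R. is_path E x r y"
      and le: "pF_pow E p F n x y * z ^ n * (1 + detour_gain) ^ (n div block_len) \<le> (\<Sum>r\<in>R. weight z r)"
      using F_free_weighted_le_sum_weight[OF assms(1,5)] by blast
    have "c * (pF_pow E p F n x y * z ^ n * (1 + detour_gain) ^ (n div block_len))
        \<le> c * (\<Sum>r\<in>R. weight z r)"
      using le \<open>0 < c\<close> by simp
    also have "\<dots> = (\<Sum>r\<in>(\<lambda>r. q0 @ r @ q1) ` R. weight z r)"
      by (simp add: c_def sum_distrib_left weight_append sum.reindex inj_on_def mult_ac)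
    also have "\<dots> \<le> G"
      unfolding G_def using assms(5,6) R q0 q1
      by (intro sum_weight_le_suminf) (auto simp: is_path_append)
    finally show ?thesis
      using \<open>0 < c\<close> by (simp add: le_divide_eq mult.commute)
  qed
  then show ?thesis by blast
qed

definition spectral_gap_factor :: real where
  "spectral_gap_factor = root block_len (1 + detour_gain)"

lemma spectral_gap_factor_gt_1: "1 < spectral_gap_factor"
  using block_len_pos detour_gain_pos by (simp add: spectral_gap_factor_def)

lemma spec_rad_F_le:
  assumes "x \<in> X" "y \<in> X" "x0 \<in> X" "y0 \<in> X"
    and "spec_rad X E p x0 y0 < ereal t" and "0 < t" and "t \<le> 2"
  shows "spec_rad_F E p F x y \<le> ereal (t / spectral_gap_factor)"
proof -
  let ?\<theta> = spectral_gap_factor and ?g = "1 + detour_gain"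
  define z where "z = 1 / t"
  have z: "0 < z" "1 / 2 \<le> z" using assms(6,7) by (simp_all add: z_def field_simps)
  have "summable (\<lambda>m. pmat_pow X E p m x0 y0 * z ^ m)"
    using assms(5,6) z(1) pmat_pow_nonneg
    by (intro summable_of_limsup_root_less) (auto simp: spec_rad_def z_def)
  then obtain C where C: "\<And>n. pF_pow E p F n x y * z ^ n * ?g ^ (n div block_len) \<le> C"
    using F_free_generating_bound[OF assms(1-4) z(2)] by blast
  have \<theta>: "0 < ?\<theta>" using spectral_gap_factor_gt_1 by simp
  show ?thesis
    unfolding spec_rad_F_def
  proof (rule limsup_root_le_of_geometric_bound)
    fix n
    have "pF_pow E p F n x y * (z * ?\<theta>) ^ n \<le> pF_pow E p F n x y * z ^ n * (?g ^ (n div block_len) * ?g)"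
      using real_root_power_le_power_div[of ?g block_len n] detour_gain_pos block_len_pos pF_pow_nonneg z(1)
      by (simp add: spectral_gap_factor_def power_mult_distrib mult.assoc mult_left_mono)
    also have "\<dots> \<le> max 1 C * ?g"
      using C[of n] detour_gain_pos by (simp add: mult.assoc[symmetric] mult_right_mono)
    finally show "pF_pow E p F n x y \<le> max 1 C * ?g * (t / ?\<theta>) ^ n"
      using z(1) \<theta> by (simp add: z_def field_simps power_divide)
  qed (use assms(6) \<theta> detour_gain_pos in auto)
qed

lemma Sup_spec_rad_F_less_spec_rad:
  assumes "x0 \<in> X" and "y0 \<in> X"
  shows "(SUP x\<in>X. SUP y\<in>X. spec_rad_F E p F x y) < spec_rad X E p x0 y0"
proof -
  let ?\<theta> = spectral_gap_factor
  obtain c where c: "c \<noteq> []" "is_path E y0 c y0" using closed_walk_exists[OF assms(2)] by blast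
  obtain q where q: "is_path E x0 q y0" using connected assms by blast
  obtain r where r: "spec_rad X E p x0 y0 = ereal r" "\<alpha> \<le> r" "r \<le> 1"
    using spec_rad_ge_alpha[OF q c(2,1)] spec_rad_le_1[of x0 y0]
    by (cases "spec_rad X E p x0 y0") auto
  have \<theta>: "1 < ?\<theta>" by (rule spectral_gap_factor_gt_1)
  have "spec_rad_F E p F x y \<le> ereal (r / ?\<theta>)" if "x \<in> X" "y \<in> X" for x y
  proof (rule dense_ge_bounded)
    show "ereal (r / ?\<theta>) < ereal (2 / ?\<theta>)"
      using r(3) \<theta> by (simp add: divide_strict_right_mono)
  next
    fix w assume w: "ereal (r / ?\<theta>) < w" "w < ereal (2 / ?\<theta>)"
    then obtain w' where w': "w = ereal w'" by (cases w) auto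
    have "r < w' * ?\<theta>" "w' * ?\<theta> \<le> 2"
      using w \<theta> by (simp_all add: w' field_simps)
    then show "spec_rad_F E p F x y \<le> w"
      using spec_rad_F_le[OF that assms, of "w' * ?\<theta>"] r alpha_pos \<theta> by (simp add: w')
  qed
  then have "(SUP x\<in>X. SUP y\<in>X. spec_rad_F E p F x y) \<le> ereal (r / ?\<theta>)"
    by (intro SUP_least) auto
  also have "\<dots> < spec_rad X E p x0 y0"
    using r alpha_pos \<theta> by (simp add: divide_less_eq)
  finally show ?thesis .
qed

end

theorem mainTheorem16:
  fixes X :: "'v set" and \<Sigma> :: "'a set" and E :: "('v,'a) edge set"
    and p :: "('v,'a) edge \<Rightarrow> real" and \<alpha> :: real and F :: "'a list set"
  assumes "finite \<Sigma>"
    and "E \<subseteq> X \<times> \<Sigma> \<times> X"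
    and "uniformly_connected X E"
    and "\<alpha> > 0"
    and "\<forall>e\<in>E. p e \<ge> \<alpha>"
    and "\<forall>x\<in>X. \<forall>A. A \<subseteq> {e\<in>E. e_init e = x} \<and> finite A \<longrightarrow> (\<Sum>e\<in>A. p e) \<le> 1"
    and "finite F" and "F \<noteq> {}" and "F \<subseteq> {w. w \<noteq> [] \<and> set w \<subseteq> \<Sigma>}"
    and "relatively_dense X E F"
    and "x0 \<in> X" and "y0 \<in> X"
  shows "(SUP x\<in>X. SUP y\<in>X. spec_rad_F E p F x y) < spec_rad X E p x0 y0"
proof -
  obtain K :: nat where K: "\<forall>e\<in>E. \<exists>ps. is_path E (e_term e) ps (e_init e) \<and> length ps \<le> K"
    using assms(3) unfolding uniformly_connected_def by blast
  obtain D :: nat where D: "\<forall>x\<in>X. \<exists>y\<in>X. \<exists>w\<in>F. dplus E x y \<le> D \<and>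
      (\<exists>ps z. is_path E y ps z \<and> path_label ps = w)"
    using assms(10) unfolding relatively_dense_def by blast
  interpret dense_forbidden_factors X \<Sigma> E p \<alpha> F K D
    using assms(1-7,9) K D by unfold_locales (auto simp: uniformly_connected_def)
  show ?thesis using Sup_spec_rad_F_less_spec_rad assms(11,12) .
qed

end
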